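(* Let $G$ be a global neural network model and $W = G + U$ a local model obtained by applying an update $U$ (all viewed as parameter vectors of the same architecture, whose output layer has $P$ neurons). Then for every $\lambda \in \mathbb{R}\setminus\{0\}$, $$\mathrm{TE}(G, W) = \mathrm{TE}(G, G + \lambda U),$$ i.e., the number of Threshold Exceedings is unchanged when the update is scaled by $\lambda$.
   Context: Consider a neural network whose output layer has $P$ neurons, indexed $i=1,\dots,P$; each output neuron $i$ has a bias and $H+1$ incoming weights (connections to neurons $h=0,\dots,H$ of the previous layer). For a model $W$ write $b_{W,i}$ for the bias of output neuron $i$ and $w_{W,i,h}$ for its weight to neuron $h$ of the previous layer. For a global model $G$ and local model $W$ define the update energy of output neuron $i$ as $$\mathcal{E}_i(G,W) = |b_{W,i} - b_{G,i}| + \sum_{h=0}^{H} |w_{W,i,h} - w_{G,i,h}|,$$ the Normalized Energy Update (NEUP) as $\mathcal{C}_i(G,W) = \mathcal{E}_i(G,W)^2 / \sum_{j=1}^{P}\mathcal{E}_j(G,W)^2$, the maximal NEUP $\mathcal{C}_{\max}(G,W) = \max_{1\le i\le P}\mathcal{C}_i(G,W)$, the threshold $\xi(G,W) = \max(0.01, 1/P)\cdot \mathcal{C}_{\max}(G,W)$, and the number of Threshold Exceedings $$\mathrm{TE}(G,W) = \#\{\, i \in \{1,\dots,P\} : \mathcal{C}_i(G,W) > \xi(G,W)\,\}.$$ For a scalar $\lambda$, $G+\lambda U$ denotes the model whose parameters are those of $G$ plus $\lambda$ times the corresponding entries of the update $U$. *)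

theory Defs
  imports "HOL-Analysis.Analysis"
begin

text \<open>Output neurons are indexed
  1..P, previous-layer neurons 0..H. ob i = bias of output neuron i, ow i h = weight from
  neuron h of the previous layer to output neuron i; rest = all remaining parameters
  (other layers), indexed by nat.\<close>
record model =
  ob :: "nat \<Rightarrow> real"
  ow :: "nat \<Rightarrow> nat \<Rightarrow> real"
  rest :: "nat \<Rightarrow> real"

definition madd :: "model \<Rightarrow> model \<Rightarrow> model" where
  "madd G U = \<lparr> ob = (\<lambda>i. ob G i + ob U i), ow = (\<lambda>i h. ow G i h + ow U i h),
                rest = (\<lambda>k. rest G k + rest U k) \<rparr>"

definition mscale :: "real \<Rightarrow> model \<Rightarrow> model" where
  "mscale l U = \<lparr> ob = (\<lambda>i. l * ob U i), ow = (\<lambda>i h. l * ow U i h),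
                  rest = (\<lambda>k. l * rest U k) \<rparr>"

definition energy :: "nat \<Rightarrow> model \<Rightarrow> model \<Rightarrow> nat \<Rightarrow> real" where
  "energy H G W i = \<bar>ob W i - ob G i\<bar> + (\<Sum>h=0..H. \<bar>ow W i h - ow G i h\<bar>)"

definition neup :: "nat \<Rightarrow> nat \<Rightarrow> model \<Rightarrow> model \<Rightarrow> nat \<Rightarrow> real" where
  "neup P H G W i = (energy H G W i)\<^sup>2 / (\<Sum>j=1..P. (energy H G W j)\<^sup>2)"

definition neup_max :: "nat \<Rightarrow> nat \<Rightarrow> model \<Rightarrow> model \<Rightarrow> real" where
  "neup_max P H G W = Max ((neup P H G W) ` {1..P})"

definition xi :: "nat \<Rightarrow> nat \<Rightarrow> model \<Rightarrow> model \<Rightarrow> real" where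
  "xi P H G W = max 0.01 (1 / real P) * neup_max P H G W"

definition TE :: "nat \<Rightarrow> nat \<Rightarrow> model \<Rightarrow> model \<Rightarrow> nat" where
  "TE P H G W = card {i \<in> {1..P}. neup P H G W i > xi P H G W}"

end

theory Submission
  imports Defs
begin

(* Scaling the update by l multiplies every update energy by |l|, so the NEUPs, being
   normalized squares of energies, lose the common factor l^2; and TE is a function of the
   NEUPs alone. *)

lemma energy_madd_mscale:
  "energy H G (madd G (mscale l U)) i = \<bar>l\<bar> * energy H G (madd G U) i"
  by (simp add: energy_def madd_def mscale_def abs_mult sum_distrib_left distrib_left)

lemma neup_madd_mscale:
  assumes "l \<noteq> 0"
  shows "neup P H G (madd G (mscale l U)) = neup P H G (madd G U)"
proof
  fix i
  have "(\<Sum>j=1..P. (energy H G (madd G (mscale l U)) j)\<^sup>2)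
        = l\<^sup>2 * (\<Sum>j=1..P. (energy H G (madd G U) j)\<^sup>2)"
    by (simp add: energy_madd_mscale power_mult_distrib sum_distrib_left)
  then show "neup P H G (madd G (mscale l U)) i = neup P H G (madd G U) i"
    using assms by (simp add: neup_def energy_madd_mscale power_mult_distrib)
qed

lemma TE_cong_neup:
  assumes "neup P H G W = neup P H G W'"
  shows "TE P H G W = TE P H G W'"
  using assms by (simp add: TE_def xi_def neup_max_def)

theorem theorem2:
  fixes P H :: nat and G U W :: model and l :: real
  assumes "P \<ge> 1"
    and "W = madd G U"
    and "l \<noteq> 0"
  shows "TE P H G W = TE P H G (madd G (mscale l U))"
  using TE_cong_neup neup_madd_mscale[OF assms(3)] assms(2) by metis

end
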